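(* Let $k\in\mathbb{Z}$, let $m$ be an odd positive integer, and let $p>1$ be an odd integer. Then $$m^{p}T_{p}^{(k)}(1,m)=\sum_{i=0}^{p}\binom{p}{i}E_{p-i}^{(k)}(1)E_{i}m^{p-i}+\sum_{i=1}^{p}\binom{p}{i-1}\big(E_{p-i+1}^{(k)}(1)-E_{p-i+1}^{(k)}\big)m^{p-i}E_{i}+2\sum_{\nu=0}^{p}\binom{p}{\nu}E_{\nu}^{(k)}E_{p+1-\nu}m^{\nu-1}.$$
   Context: Euler polynomials $E_n(x)$ are defined by $\frac{2}{e^t+1}e^{xt}=\sum_{n=0}^{\infty}E_n(x)\frac{t^n}{n!}$ and $E_n=E_n(0)$. For $k\in\mathbb{Z}$, $\mathrm{Ei}_k(x)=\sum_{n=1}^{\infty}\frac{x^n}{n^k(n-1)!}$; the poly-Genocchi polynomials $G_n^{(k)}(x)$ are defined by $\frac{2\,\mathrm{Ei}_k(\log(1+t))}{e^t+1}e^{xt}=\sum_{n=0}^{\infty}G_n^{(k)}(x)\frac{t^n}{n!}$; the poly-Euler polynomials are $E_n^{(k)}(x)=\frac{G_{n+1}^{(k)}(x)}{n+1}$ ($n\ge0$), $E_n^{(k)}=E_n^{(k)}(0)$, and the poly-Euler functions are $\overline{E}_n^{(k)}(x)=E_n^{(k)}(x-[x])$, where $[x]$ is the greatest integer $\le x$. For positive integers $h,m,p$, the poly-Dedekind type DC sum is $T_p^{(k)}(h,m)=2\sum_{\mu=1}^{m-1}(-1)^{\mu}\frac{\mu}{m}\overline{E}_p^{(k)}\big(\frac{h\mu}{m}\big)$.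 *)

theory Defs
  imports "HOL-Computational_Algebra.Formal_Power_Series"
begin

definition euler_poly :: "nat \<Rightarrow> real \<Rightarrow> real" where
  "euler_poly n x = fact n * fps_nth ((fps_const 2 / (fps_exp 1 + 1)) * fps_exp x) n"

definition euler_num :: "nat \<Rightarrow> real" where
  "euler_num n = euler_poly n 0"

definition Ei_fps :: "int \<Rightarrow> real fps" where
  "Ei_fps k = Abs_fps (\<lambda>n. if n = 0 then 0 else 1 / ((real n) powi k * fact (n - 1)))"

(* poly-Genocchi polynomials:
   2 Ei_k(log(1+t))/(e^t+1) e^{xt} = sum G_n^{(k)}(x) t^n/n! ; fps_ln 1 = log(1+t) *)
definition poly_genocchi :: "int \<Rightarrow> nat \<Rightarrow> real \<Rightarrow> real" where
  "poly_genocchi k n x =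
     fact n * fps_nth ((fps_const 2 * (Ei_fps k oo fps_ln 1) / (fps_exp 1 + 1)) * fps_exp x) n"

definition poly_euler :: "int \<Rightarrow> nat \<Rightarrow> real \<Rightarrow> real" where
  "poly_euler k n x = poly_genocchi k (n + 1) x / real (n + 1)"

definition poly_euler_num :: "int \<Rightarrow> nat \<Rightarrow> real" where
  "poly_euler_num k n = poly_euler k n 0"

definition poly_euler_fun :: "int \<Rightarrow> nat \<Rightarrow> real \<Rightarrow> real" where
  "poly_euler_fun k n x = poly_euler k n (x - of_int \<lfloor>x\<rfloor>)"

definition poly_DC_sum :: "int \<Rightarrow> nat \<Rightarrow> nat \<Rightarrow> nat \<Rightarrow> real" where
  "poly_DC_sum k p h m =
     2 * (\<Sum>\<mu>=1..m-1. (-1) ^ \<mu> * (real \<mu> / real m) * poly_euler_fun k p (real h * real \<mu> / real m))"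

end

theory Submission
  imports Defs
begin

(* Expanding E_p^(k)(mu/m) binomially in the numbers E_i^(k) turns m^p T_p^(k)(1,m) into a
   combination of alternating power sums sum_{mu<m} (-1)^mu mu^n.  Since
   E_n(x+1) + E_n(x) = 2 x^n, these telescope to (E_n + E_n(m))/2 when m is odd.  Expanding
   E_n(m) binomially leaves a sum over the triangle i + j <= p, which the Pascal-type identity
   C(p,i) C(p+1-i,j) = C(p,j) C(p-j,i) + C(p,j-1) C(p-j+1,i) splits into the first two sums of
   the right-hand side; the terms 2 E_n give the third. *)

lemma fact_nth_mult_fps_exp:
  fixes A :: "'a :: field_char_0 fps"
  shows "fact n * fps_nth (A * fps_exp x) n =
    (\<Sum>j\<le>n. of_nat (n choose j) * (fact j * fps_nth A j) * x ^ (n - j))"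
proof -
  have "fact n * fps_nth (A * fps_exp x) n =
      (\<Sum>j\<le>n. fact n * (fps_nth A j * (x ^ (n - j) / fact (n - j))))"
    by (simp add: fps_mult_nth sum_distrib_left atLeast0AtMost)
  also have "\<dots> = (\<Sum>j\<le>n. of_nat (n choose j) * (fact j * fps_nth A j) * x ^ (n - j))"
    by (rule sum.cong) (simp_all add: binomial_fact field_simps)
  finally show ?thesis .
qed

lemma euler_poly_binomial:
  "euler_poly n x = (\<Sum>j\<le>n. real (n choose j) * euler_num j * x ^ (n - j))"
  by (simp add: euler_poly_def euler_num_def fact_nth_mult_fps_exp)

lemma poly_euler_binomial:
  "poly_euler k n x = (\<Sum>i\<le>n. real (n choose i) * poly_euler_num k i * x ^ (n - i))"
proof -
  define A :: "real fps" where "A = fps_const 2 * (Ei_fps k oo fps_ln 1) / (fps_exp 1 + 1)"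
  define a where "a i = fact (Suc i) * fps_nth A (Suc i) / real (Suc i)" for i
  have appell: "poly_euler k n x = (\<Sum>i\<le>n. real (n choose i) * a i * x ^ (n - i))" for n x
  proof -
    have "poly_euler k n x =
        (\<Sum>j\<le>Suc n. real (Suc n choose j) * (fact j * fps_nth A j) * x ^ (Suc n - j)) / real (Suc n)"
      unfolding poly_euler_def poly_genocchi_def fact_nth_mult_fps_exp A_def[symmetric] by simp
    \<comment> \<open>the term j = 0 vanishes because Ei_fps k, hence A, has no constant term\<close>
    also have "\<dots> = (\<Sum>i\<le>n. real (Suc n choose Suc i) / real (Suc n) *
        (fact (Suc i) * fps_nth A (Suc i)) * x ^ (n - i))"
      by (subst sum.atMost_Suc_shift) (simp add: A_def Ei_fps_def sum_divide_distrib)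
    also have "\<dots> = (\<Sum>i\<le>n. real (n choose i) * a i * x ^ (n - i))"
    proof (rule sum.cong)
      fix i
      have "real (Suc n choose Suc i) / real (Suc n) = real (n choose i) / real (Suc i)"
        using Suc_times_binomial_eq[of n i] by (simp add: field_simps flip: of_nat_mult)
      then show "real (Suc n choose Suc i) / real (Suc n) * (fact (Suc i) * fps_nth A (Suc i)) * x ^ (n - i) =
          real (n choose i) * a i * x ^ (n - i)"
        by (simp add: a_def del: of_nat_Suc fact_Suc)
    qed simp
    finally show ?thesis .
  qed
  have "poly_euler_num k i = a i" for i
  proof -
    have "poly_euler_num k i = (\<Sum>j\<in>{i}. real (i choose j) * a j * 0 ^ (i - j))"
      unfolding poly_euler_num_def appell by (rule sum.mono_neutral_right) auto
    then show ?thesis by simp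
  qed
  with appell show ?thesis by simp
qed

lemma euler_poly_plus_1: "euler_poly n (x + 1) + euler_poly n x = 2 * x ^ n"
proof -
  define B :: "real fps" where "B = fps_const 2 / (fps_exp 1 + 1)"
  have "B * (fps_exp 1 + 1) = fps_const 2 * (inverse (fps_exp 1 + 1) * (fps_exp 1 + 1))"
    by (simp add: B_def fps_divide_unit mult.assoc)
  also have "\<dots> = 2"
    by (simp add: inverse_mult_eq_1 numeral_fps_const)
  finally have unit: "B * (fps_exp 1 + 1) = 2" .
  have "B * fps_exp (x + 1) + B * fps_exp x = B * (fps_exp 1 + 1) * fps_exp x"
    by (simp add: fps_exp_add_mult algebra_simps)
  also have "\<dots> = 2 * fps_exp x"
    by (simp only: unit)
  finally have "B * fps_exp (x + 1) + B * fps_exp x = 2 * fps_exp x" .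
  then have "fact n * fps_nth (B * fps_exp (x + 1)) n + fact n * fps_nth (B * fps_exp x) n =
      fact n * fps_nth (2 * fps_exp x) n"
    by (metis distrib_left fps_add_nth)
  then show ?thesis
    by (simp add: euler_poly_def B_def numeral_fps_const)
qed

lemma alternating_power_sum_euler_poly:
  "2 * (\<Sum>\<mu><N. (-1) ^ \<mu> * real \<mu> ^ n) = euler_num n - (-1) ^ N * euler_poly n (real N)"
proof (induction N)
  case 0
  then show ?case by (simp add: euler_num_def)
next
  case (Suc N)
  have "(-1) ^ N * (2 * real N ^ n) =
      (-1) ^ N * euler_poly n (real N + 1) + (-1) ^ N * euler_poly n (real N)"
    by (simp add: euler_poly_plus_1 flip: distrib_left)
  with Suc show ?case by (simp add: algebra_simps)
qed

lemma choose_mult_choose_diff_commute: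
  fixes p :: nat
  assumes "i + j \<le> p"
  shows "(p choose i) * (p - i choose j) = (p choose j) * (p - j choose i)"
proof -
  have "(p choose i) * (p - i choose j) = (p choose (i + j)) * (i + j choose i)"
    using choose_mult[of i "i + j" p] assms by simp
  also have "\<dots> = (p choose j) * (p - j choose i)"
    using choose_mult[of j "i + j" p] assms binomial_symmetric[of i "i + j"] by (simp add: add.commute)
  finally show ?thesis .
qed

lemma choose_mult_choose_Suc_diff:
  fixes p :: nat
  assumes "i + j \<le> p"
  shows "(p choose i) * (Suc (p - i) choose j) =
    (p choose j) * (p - j choose i) + (if j = 0 then 0 else (p choose (j - 1)) * (Suc (p - j) choose i))"
proof (cases j)
  case (Suc j')
  have "(p choose i) * (Suc (p - i) choose j) = (p choose i) * (p - i choose j') + (p choose i) * (p - i choose j)"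
    by (simp add: Suc distrib_left)
  also have "\<dots> = (p choose j') * (p - j' choose i) + (p choose j) * (p - j choose i)"
    using assms Suc by (simp add: choose_mult_choose_diff_commute)
  finally show ?thesis
    using assms Suc by (simp add: Suc_diff_Suc)
qed simp

lemma sum_triangle_rows:
  "(\<Sum>i\<le>p. \<Sum>j\<le>p - i. f i j) = (\<Sum>(i, j)\<in>{(i, j). i + j \<le> (p::nat)}. f i j)"
proof -
  have "Sigma {..p} (\<lambda>i. {..p - i}) = {(i, j). i + j \<le> p}" by auto
  then show ?thesis by (simp add: sum.Sigma)
qed

lemma sum_triangle_cols:
  "(\<Sum>j\<le>p. \<Sum>i\<le>p - j. f i j) = (\<Sum>(i, j)\<in>{(i, j). i + j \<le> (p::nat)}. f i j)"
  unfolding sum_triangle_rows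
  by (rule sum.reindex_bij_witness[where i=prod.swap and j=prod.swap]) auto

lemma power_mult_poly_euler_divide:
  assumes "M \<noteq> 0"
  shows "M ^ p * (y / M * poly_euler k p (y / M)) =
    (\<Sum>i\<le>p. real (p choose i) * poly_euler_num k i * M powi (int i - 1) * y ^ (p + 1 - i))"
proof -
  have scale: "M ^ p * (y / M * (y / M) ^ (p - i)) = M powi (int i - 1) * y ^ (p + 1 - i)" if "i \<le> p" for i
  proof -
    have "M ^ p = M ^ i * M ^ (p - i)" and "y ^ (p + 1 - i) = y * y ^ (p - i)"
      using that by (simp_all flip: power_add add: Suc_diff_le)
    with assms show ?thesis by (simp add: power_int_diff power_divide field_simps)
  qed
  have "M ^ p * (y / M * poly_euler k p (y / M)) =
      (\<Sum>i\<le>p. real (p choose i) * poly_euler_num k i * (M ^ p * (y / M * (y / M) ^ (p - i))))"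
    by (simp add: poly_euler_binomial sum_distrib_left ac_simps)
  also have "\<dots> = (\<Sum>i\<le>p. real (p choose i) * poly_euler_num k i * M powi (int i - 1) * y ^ (p + 1 - i))"
    by (rule sum.cong[OF refl]) (simp only: scale atMost_iff mult.assoc)
  finally show ?thesis .
qed

lemma power_mult_poly_DC_sum_1:
  assumes "m > 0"
  shows "real m ^ p * poly_DC_sum k p 1 m =
    (\<Sum>i\<le>p. real (p choose i) * poly_euler_num k i * real m powi (int i - 1) *
      (euler_num (p + 1 - i) - (-1) ^ m * euler_poly (p + 1 - i) (real m)))"
proof -
  define M where "M = real m"
  have "M \<noteq> 0" using assms by (simp add: M_def)
  have "M ^ p * poly_DC_sum k p 1 m =
      (\<Sum>\<mu>=1..m-1. 2 * (-1) ^ \<mu> * (M ^ p * (real \<mu> / M * poly_euler k p (real \<mu> / M))))"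
    unfolding poly_DC_sum_def sum_distrib_left
  proof (rule sum.cong[OF refl])
    fix \<mu> assume "\<mu> \<in> {1..m-1}"
    then have "\<lfloor>real \<mu> / M\<rfloor> = 0"
      by (auto simp: M_def floor_eq_iff divide_less_eq)
    then show "M ^ p * (2 * ((-1) ^ \<mu> * (real \<mu> / real m) * poly_euler_fun k p (real 1 * real \<mu> / real m))) =
        2 * (-1) ^ \<mu> * (M ^ p * (real \<mu> / M * poly_euler k p (real \<mu> / M)))"
      by (simp add: poly_euler_fun_def flip: M_def)
  qed
  also have "\<dots> = (\<Sum>i\<le>p. real (p choose i) * poly_euler_num k i * M powi (int i - 1) *
      (2 * (\<Sum>\<mu>=1..m-1. (-1) ^ \<mu> * real \<mu> ^ (p + 1 - i))))"
    unfolding power_mult_poly_euler_divide[OF \<open>M \<noteq> 0\<close>] sum_distrib_left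
    by (subst sum.swap) (simp only: ac_simps)
  also have "\<dots> = (\<Sum>i\<le>p. real (p choose i) * poly_euler_num k i * M powi (int i - 1) *
      (2 * (\<Sum>\<mu><m. (-1) ^ \<mu> * real \<mu> ^ (p + 1 - i))))"
    by (intro sum.cong refl arg_cong2[where f="(*)"] sum.mono_neutral_left) auto
  finally show ?thesis
    by (simp add: alternating_power_sum_euler_poly M_def)
qed

lemma power_int_mult_euler_num_add_euler_poly:
  fixes x :: real
  assumes "x \<noteq> 0" and "i \<le> p"
  shows "x powi (int i - 1) * (euler_num (p + 1 - i) + euler_poly (p + 1 - i) x) =
    2 * euler_num (p + 1 - i) * x powi (int i - 1) +
    (\<Sum>j\<le>p - i. real (p + 1 - i choose j) * euler_num j * x ^ (p - j))"
proof -
  have exponent: "x powi (int i - 1) * x ^ (p + 1 - i - j) = x ^ (p - j)" if "j \<le> p - i" for j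
  proof -
    have "x powi (int i - 1) * x ^ (p + 1 - i - j) = x powi (int i - 1 + int (p + 1 - i - j))"
      using assms(1) by (simp add: power_int_add)
    also have "int i - 1 + int (p + 1 - i - j) = int (p - j)"
      using that assms(2) by simp
    finally show ?thesis by simp
  qed
  have "euler_poly (p + 1 - i) x = euler_num (p + 1 - i) +
      (\<Sum>j\<le>p - i. real (p + 1 - i choose j) * euler_num j * x ^ (p + 1 - i - j))"
    using assms(2) by (simp add: euler_poly_binomial Suc_diff_le)
  then have "x powi (int i - 1) * (euler_num (p + 1 - i) + euler_poly (p + 1 - i) x) =
      2 * euler_num (p + 1 - i) * x powi (int i - 1) +
      (\<Sum>j\<le>p - i. real (p + 1 - i choose j) * euler_num j * (x powi (int i - 1) * x ^ (p + 1 - i - j)))"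
    by (simp add: sum_distrib_left algebra_simps)
  also have "(\<Sum>j\<le>p - i. real (p + 1 - i choose j) * euler_num j * (x powi (int i - 1) * x ^ (p + 1 - i - j))) =
      (\<Sum>j\<le>p - i. real (p + 1 - i choose j) * euler_num j * x ^ (p - j))"
    by (rule sum.cong[OF refl]) (simp only: exponent atMost_iff)
  finally show ?thesis .
qed

lemma power_mult_poly_DC_sum_1_odd:
  assumes "odd m" and "m > 0"
  shows "real m ^ p * poly_DC_sum k p 1 m =
    2 * (\<Sum>i\<le>p. real (p choose i) * poly_euler_num k i * euler_num (p + 1 - i) * real m powi (int i - 1))
    + (\<Sum>(i, j)\<in>{(i, j). i + j \<le> p}.
        real (p choose i) * real (p + 1 - i choose j) * poly_euler_num k i * euler_num j * real m ^ (p - j))"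
proof -
  define M where "M = real m"
  have "M \<noteq> 0" using assms(2) by (simp add: M_def)
  have "(-1 :: real) ^ m = -1" using assms(1) by simp
  then have "real m ^ p * poly_DC_sum k p 1 m = (\<Sum>i\<le>p. real (p choose i) * poly_euler_num k i *
      (M powi (int i - 1) * (euler_num (p + 1 - i) + euler_poly (p + 1 - i) M)))"
    unfolding power_mult_poly_DC_sum_1[OF assms(2)] M_def by (simp add: mult.assoc)
  also have "\<dots> = (\<Sum>i\<le>p. real (p choose i) * poly_euler_num k i *
      (2 * euler_num (p + 1 - i) * M powi (int i - 1) +
       (\<Sum>j\<le>p - i. real (p + 1 - i choose j) * euler_num j * M ^ (p - j))))"
    by (rule sum.cong[OF refl])
      (simp only: power_int_mult_euler_num_add_euler_poly[OF \<open>M \<noteq> 0\<close>] atMost_iff)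
  also have "\<dots> = 2 * (\<Sum>i\<le>p. real (p choose i) * poly_euler_num k i * euler_num (p + 1 - i) * M powi (int i - 1))
      + (\<Sum>i\<le>p. \<Sum>j\<le>p - i.
          real (p choose i) * real (p + 1 - i choose j) * poly_euler_num k i * euler_num j * M ^ (p - j))"
    by (simp add: distrib_left sum.distrib sum_distrib_left ac_simps)
  finally show ?thesis
    by (simp only: sum_triangle_rows M_def)
qed

lemma poly_euler_1_sum_eq_triangle_sum:
  "(\<Sum>j=0..p. real (p choose j) * poly_euler k (p - j) 1 * euler_num j * x ^ (p - j)) =
   (\<Sum>(i, j)\<in>{(i, j). i + j \<le> p}.
      real (p choose j) * real (p - j choose i) * poly_euler_num k i * euler_num j * x ^ (p - j))"
  unfolding sum_triangle_cols[symmetric] atLeast0AtMost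
  by (rule sum.cong[OF refl]) (simp add: poly_euler_binomial sum_distrib_left sum_distrib_right mult_ac)

lemma poly_euler_1_diff_sum_eq_triangle_sum:
  "(\<Sum>j=1..p. real (p choose (j - 1)) *
      (poly_euler k (p - j + 1) 1 - poly_euler_num k (p - j + 1)) * x ^ (p - j) * euler_num j) =
   (\<Sum>(i, j)\<in>{(i, j). i + j \<le> p}.
      (if j = 0 then 0 else real (p choose (j - 1)) * real (p - j + 1 choose i)) *
      poly_euler_num k i * euler_num j * x ^ (p - j))"
proof -
  have diff: "poly_euler k (q + 1) 1 - poly_euler_num k (q + 1) =
      (\<Sum>i\<le>q. real (q + 1 choose i) * poly_euler_num k i)" for q
    by (simp add: poly_euler_binomial[of k "Suc q"] sum.atMost_Suc)
  have "(\<Sum>j=1..p. real (p choose (j - 1)) *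
        (poly_euler k (p - j + 1) 1 - poly_euler_num k (p - j + 1)) * x ^ (p - j) * euler_num j) =
      (\<Sum>j=1..p. \<Sum>i\<le>p - j.
        real (p choose (j - 1)) * real (p - j + 1 choose i) * poly_euler_num k i * euler_num j * x ^ (p - j))"
    unfolding diff by (simp add: sum_distrib_left sum_distrib_right mult_ac)
  also have "\<dots> = (\<Sum>j\<le>p. \<Sum>i\<le>p - j.
      (if j = 0 then 0 else real (p choose (j - 1)) * real (p - j + 1 choose i)) *
      poly_euler_num k i * euler_num j * x ^ (p - j))"
    by (rule sum.mono_neutral_cong_left) auto
  finally show ?thesis
    unfolding sum_triangle_cols .
qed

lemma poly_euler_1_sums_eq_triangle_sum:
  "(\<Sum>j=0..p. real (p choose j) * poly_euler k (p - j) 1 * euler_num j * x ^ (p - j))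
   + (\<Sum>j=1..p. real (p choose (j - 1)) *
        (poly_euler k (p - j + 1) 1 - poly_euler_num k (p - j + 1)) * x ^ (p - j) * euler_num j)
   = (\<Sum>(i, j)\<in>{(i, j). i + j \<le> p}.
        real (p choose i) * real (p + 1 - i choose j) * poly_euler_num k i * euler_num j * x ^ (p - j))"
proof -
  have pascal: "real (p choose i) * real (Suc p - i choose j) =
      real (p choose j) * real (p - j choose i) +
      (if j = 0 then 0 else real (p choose (j - 1)) * real (Suc (p - j) choose i))"
    if "i + j \<le> p" for i j
    using arg_cong[OF choose_mult_choose_Suc_diff[OF that], of real] that
    by (cases "j = 0") (simp_all add: Suc_diff_le)
  show ?thesis
    unfolding poly_euler_1_sum_eq_triangle_sum poly_euler_1_diff_sum_eq_triangle_sum sum.distrib[symmetric]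
    by (rule sum.cong[OF refl]) (clarsimp simp: pascal distrib_right)
qed

theorem theorem12:
  fixes k :: int and m p :: nat
  assumes "odd m" and "m > 0" and "odd p" and "p > 1"
  shows "real m ^ p * poly_DC_sum k p 1 m =
      (\<Sum>i=0..p. real (p choose i) * poly_euler k (p - i) 1 * euler_num i * real m ^ (p - i))
    + (\<Sum>i=1..p. real (p choose (i - 1)) *
         (poly_euler k (p - i + 1) 1 - poly_euler_num k (p - i + 1)) * real m ^ (p - i) * euler_num i)
    + 2 * (\<Sum>\<nu>=0..p. real (p choose \<nu>) * poly_euler_num k \<nu> * euler_num (p + 1 - \<nu>)
         * real m powi (int \<nu> - 1))"
  unfolding power_mult_poly_DC_sum_1_odd[OF assms(1,2)] poly_euler_1_sums_eq_triangle_sum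
  by (simp only: atLeast0AtMost add.commute)

end
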